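(* Consider the AIRPF algorithm described in the context, with $S_m\in\mathbb{N}_0$, $m=2^{S_m}$, $M\in\mathbb{N}$, in which filters interact at every stage, i.e. $\alpha_s=A_s$ for every time and every $s\in\{1,\ldots,S_m\}$. For $n\in\mathbb{N}$ and $s\in\{0,\ldots,S_m\}$ let $\mathcal{G}_{n,s}$ denote the $\sigma$-algebra generated by all particle blocks $\boldsymbol{\xi}^k_{p,t}$, $k\in\{1,\ldots,m\}$, with $(S_m+1)p+t\le(S_m+1)n+s$. Then for all $\psi\in\mathcal{B}(\mathbb{X}^{2M})$, $n\in\mathbb{N}$, $s\in\{1,\ldots,S_m-1\}$ and $i_{S_m+1},j_{S_m+1}\in\{1,\ldots,m\}$, $$\sum_{i_{S_m},j_{S_m}=1}^m\mathbb{E}\Big[A_{S_m}^{i_{S_m+1}i_{S_m}}A_{S_m}^{j_{S_m+1}j_{S_m}}W^{i_{S_m}}_{n,S_m}W^{j_{S_m}}_{n,S_m}\psi(\boldsymbol{\xi}^{i_{S_m}}_{n,S_m},\boldsymbol{\xi}^{j_{S_m}}_{n,S_m})\,\Big|\,\mathcal{G}_{n,s}\Big]$$ $$=\sum_{i_s,\ldots,i_{S_m}=1}^m\ \sum_{j_s,\ldots,j_{S_m}=1}^m\left[\prod_{q=s}^{S_m}A_q^{i_{q+1}i_q}A_q^{j_{q+1}j_q}\right]W^{i_s}_{n,s}W^{j_s}_{n,s}\,\mathcal{C}_{(i_{s+1},\ldots,i_{S_m}),(j_{s+1},\ldots,j_{S_m})}(\psi)(\boldsymbol{\xi}^{i_s}_{n,s},\boldsymbol{\xi}^{j_s}_{n,s})$$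 almost surely.
   Context: $(\mathbb{X},\mathcal{X})$ is a measurable space; $\mathcal{B}(\mathbb{X}^{2M})$ denotes bounded measurable real functions of two blocks $(\boldsymbol{\xi},\boldsymbol{\xi}')\in\mathbb{X}^M\times\mathbb{X}^M$. Model: probability measure $\pi_0$ on $\mathbb{X}$, Markov kernels $K_n$ ($n\ge1$), non-negative bounded measurable potentials $g_n$ ($n\ge0$). AIRPF: for $s\in\{1,\ldots,S_m\}$, $A_s=\mathbf{I}_{2^{S_m-s}}\otimes\tfrac12\mathbf{1}_2\otimes\mathbf{I}_{2^{s-1}}$ ($\otimes$ Kronecker product, $\mathbf{I}_\ell$ identity, $\mathbf{1}_2$ the $2\times2$ all-ones matrix), entries $A_s^{k\ell}$. For time $n\in\mathbb{N}_0$, stage $s\in\{0,\ldots,S_m\}$ and filter $k\in\{1,\ldots,m\}$ there is a block $\boldsymbol{\xi}^k_{n,s}=(\xi^{k,1}_{n,s},\ldots,\xi^{k,M}_{n,s})\in\mathbb{X}^M$ and a weight $W^k_{n,s}$: (i) $W^k_{0,0}=1$, $\boldsymbol{\xi}^k_{0,0}$ i.i.d. $\pi_0^{\otimes M}$; (ii) $W^k_{n,1}=W^k_{n,0}\frac1M\sum_ig_n(\xi^{k,i}_{n,0})$ and, conditionally independently over $k,i$, $\xi^{k,i}_{n,1}\sim\sum_jg_n(\xi^{k,j}_{n,0})\delta_{\xi^{k,j}_{n,0}}/\sum_jg_n(\xi^{k,j}_{n,0})$; (iii) for $s=1,\ldots,S_m$, with interaction matrix $\alpha_s$: $W^k_{n,s+1}=\sum_\ell\alpha_s^{k\ell}W^\ell_{n,s}$,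 conditionally independently over $k$ an index $L_k$ with $\mathbb{P}(L_k=\ell)=\alpha_s^{k\ell}W^\ell_{n,s}/W^k_{n,s+1}$ is drawn; if $s<S_m$, $\boldsymbol{\xi}^k_{n,s+1}=\boldsymbol{\xi}^{L_k}_{n,s}$; if $s=S_m$, $W^k_{n+1,0}=W^k_{n,S_m+1}$ and $\boldsymbol{\xi}^k_{n+1,0}\sim K_{n+1}^{\otimes M}(\boldsymbol{\xi}^{L_k}_{n,S_m},\cdot)$ (each particle moved independently by $K_{n+1}$). Collision operators: for $\psi$ on $E\times E$ (here $E=\mathbb{X}^M$), $\mathcal{C}_0(\psi)=\psi$, $\mathcal{C}_1(\psi)(x,x')=\psi(x,x)$; $\mathcal{C}_{(a_1,\ldots,a_p),(b_1,\ldots,b_p)}=\mathcal{C}_1$ if $a_k=b_k$ for some $k$, else $\mathcal{C}_0$. *)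

theory Defs
  imports "HOL-Probability.Probability"
begin

definition idm :: "nat \<Rightarrow> nat \<Rightarrow> real" where
  "idm i j = (if i = j then 1 else 0)"

text \<open>Kronecker product; d is the dimension of the (square) right factor B.\<close>
definition kron :: "nat \<Rightarrow> (nat \<Rightarrow> nat \<Rightarrow> real) \<Rightarrow> (nat \<Rightarrow> nat \<Rightarrow> real) \<Rightarrow> nat \<Rightarrow> nat \<Rightarrow> real" where
  "kron d A B i j = A (i div d) (j div d) * B (i mod d) (j mod d)"

definition half_ones :: "nat \<Rightarrow> nat \<Rightarrow> real" where
  "half_ones i j = 1 / 2"

text \<open>A_s = I_(2^(Sm-s)) (x) (1/2) 1_2 (x) I_(2^(s-1)), as a 0-based m x m matrix (m = 2^Sm);
  the size of the left identity factor only fixes the index range {0..<m}.\<close>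
definition Amat :: "nat \<Rightarrow> nat \<Rightarrow> nat \<Rightarrow> real" where
  "Amat s = kron (2 ^ (s - 1)) (kron 2 idm half_ones) idm"

text \<open>Entry A_s^{k l} with the paper's 1-based indices k, l in {1..m}.\<close>
definition A_entry :: "nat \<Rightarrow> nat \<Rightarrow> nat \<Rightarrow> real" where
  "A_entry s k l = Amat s (k - 1) (l - 1)"

definition C0 :: "('b \<Rightarrow> 'b \<Rightarrow> real) \<Rightarrow> 'b \<Rightarrow> 'b \<Rightarrow> real" where
  "C0 \<psi> = \<psi>"

definition C1 :: "('b \<Rightarrow> 'b \<Rightarrow> real) \<Rightarrow> 'b \<Rightarrow> 'b \<Rightarrow> real" where
  "C1 \<psi> x x' = \<psi> x x"

text \<open>C_{(a_1..a_p),(b_1..b_p)}; tuples are lists of equal length p.\<close>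
definition coll :: "nat list \<Rightarrow> nat list \<Rightarrow> ('b \<Rightarrow> 'b \<Rightarrow> real) \<Rightarrow> 'b \<Rightarrow> 'b \<Rightarrow> real" where
  "coll as bs = (if \<exists>k < length as. as ! k = bs ! k then C1 else C0)"

definition gens :: "'a measure \<Rightarrow> ('a \<Rightarrow> 'b) \<Rightarrow> 'b measure \<Rightarrow> 'a set set" where
  "gens M Y N = {Y -` B \<inter> space M | B. B \<in> sets N}"

definition cond_prob :: "'a measure \<Rightarrow> 'a measure \<Rightarrow> 'a set \<Rightarrow> 'a \<Rightarrow> real" where
  "cond_prob M F E = real_cond_exp M F (indicator E)"

definition cond_law :: "'a measure \<Rightarrow> 'a measure \<Rightarrow> ('a \<Rightarrow> 'b) \<Rightarrow> 'b measure \<Rightarrow> ('a \<Rightarrow> 'b measure) \<Rightarrow> bool" where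
  "cond_law M F Y N \<kappa> \<longleftrightarrow>
     (\<forall>B \<in> sets N. AE \<omega> in M. cond_prob M F (Y -` B \<inter> space M) \<omega> = measure (\<kappa> \<omega>) B)"

text \<open>Blocks live in X^Np = PiM {1..Np} X.  Pseudo-time of (p,t): tau = (Sm+1) p + t.\<close>
definition blockM :: "nat \<Rightarrow> 'x measure \<Rightarrow> (nat \<Rightarrow> 'x) measure" where
  "blockM Np X = PiM {1..Np} (\<lambda>_. X)"

definition G_alg :: "'a measure \<Rightarrow> 'x measure \<Rightarrow> nat \<Rightarrow> nat \<Rightarrow>
    (nat \<Rightarrow> nat \<Rightarrow> nat \<Rightarrow> 'a \<Rightarrow> nat \<Rightarrow> 'x) \<Rightarrow> nat \<Rightarrow> nat \<Rightarrow> 'a measure" where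
  "G_alg M X Sm Np \<xi> n s = sigma (space M)
     (\<Union>{gens M (\<xi> p t k) (blockM Np X) | p t k.
         t \<le> Sm \<and> k \<in> {1..2^Sm} \<and> (Sm+1)*p + t \<le> (Sm+1)*n + s})"

text \<open>Full history of the algorithm up to key c.  Keys: blocks xi_{p,t} and the stage-(ii)
  selection indices J_{p,.,.} (which produce xi_{p,1}) are revealed at 2 tau(p,t) resp. 2 tau(p,1);
  the stage-(iii) selection indices L_{p,t,.} are revealed at 2 tau(p,t) + 1.\<close>
definition H_alg :: "'a measure \<Rightarrow> 'x measure \<Rightarrow> nat \<Rightarrow> nat \<Rightarrow>
    (nat \<Rightarrow> nat \<Rightarrow> nat \<Rightarrow> 'a \<Rightarrow> nat \<Rightarrow> 'x) \<Rightarrow>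
    (nat \<Rightarrow> nat \<Rightarrow> nat \<Rightarrow> 'a \<Rightarrow> nat) \<Rightarrow> (nat \<Rightarrow> nat \<Rightarrow> nat \<Rightarrow> 'a \<Rightarrow> nat) \<Rightarrow> nat \<Rightarrow> 'a measure" where
  "H_alg M X Sm Np \<xi> J L c = sigma (space M)
     (\<Union>{gens M (\<xi> p t k) (blockM Np X) | p t k.
          t \<le> Sm \<and> k \<in> {1..2^Sm} \<and> 2*((Sm+1)*p + t) \<le> c}
      \<union> \<Union>{gens M (J p k i) (count_space UNIV) | p k i.
          k \<in> {1..2^Sm} \<and> i \<in> {1..Np} \<and> 2*((Sm+1)*p + 1) \<le> c}
      \<union> \<Union>{gens M (L p t k) (count_space UNIV) | p t k.
          t \<in> {1..Sm} \<and> k \<in> {1..2^Sm} \<and> 2*((Sm+1)*p + t) + 1 \<le> c})"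

text \<open>
  xi p t k \<omega> : block xi^k_{p,t} (a function on {1..Np}, extensional);
  W p t k \<omega> : weight W^k_{p,t};
  J p k i \<omega> : index j with xi^{k,i}_{p,1} = xi^{k,j}_{p,0} (step (ii));
  L p t k \<omega> : index L_k drawn at stage t of time p (step (iii)).
  Conditional selection laws are stated multiplied by their denominators, i.e.
  P(L_k = l_k, k \<in> S | past) * prod_{k\<in>S} W^k_{p,t+1} = prod_{k\<in>S} A^{k l_k} W^{l_k}_{p,t},
  which is the prescribed conditional joint law wherever it is defined (positive denominators).\<close>
definition airpf :: "'a measure \<Rightarrow> 'x measure \<Rightarrow> 'x measure \<Rightarrow> (nat \<Rightarrow> 'x \<Rightarrow> 'x measure) \<Rightarrow>
    (nat \<Rightarrow> 'x \<Rightarrow> real) \<Rightarrow> nat \<Rightarrow> nat \<Rightarrow>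
    (nat \<Rightarrow> nat \<Rightarrow> nat \<Rightarrow> 'a \<Rightarrow> nat \<Rightarrow> 'x) \<Rightarrow> (nat \<Rightarrow> nat \<Rightarrow> nat \<Rightarrow> 'a \<Rightarrow> real) \<Rightarrow>
    (nat \<Rightarrow> nat \<Rightarrow> nat \<Rightarrow> 'a \<Rightarrow> nat) \<Rightarrow> (nat \<Rightarrow> nat \<Rightarrow> nat \<Rightarrow> 'a \<Rightarrow> nat) \<Rightarrow> bool" where
  "airpf M X \<pi>0 K g Sm Np \<xi> W J L \<longleftrightarrow>
    (let m = 2^Sm; H = H_alg M X Sm Np \<xi> J L; \<tau> = (\<lambda>p t. (Sm+1)*p + t) in
     prob_space M \<and>
     \<comment> \<open>model\<close>
     prob_space \<pi>0 \<and> sets \<pi>0 = sets X \<and>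
     (\<forall>n\<ge>1. K n \<in> measurable X (prob_algebra X)) \<and>
     (\<forall>n. g n \<in> borel_measurable X \<and> (\<forall>x. 0 \<le> g n x) \<and> (\<exists>B. \<forall>x. g n x \<le> B)) \<and>
     \<comment> \<open>measurability of the random elements\<close>
     (\<forall>p t k. t \<le> Sm \<longrightarrow> k \<in> {1..m} \<longrightarrow> \<xi> p t k \<in> measurable M (blockM Np X)) \<and>
     (\<forall>p k i. J p k i \<in> measurable M (count_space UNIV) \<and> (\<forall>\<omega>. J p k i \<omega> \<in> {1..Np})) \<and>
     (\<forall>p t k. L p t k \<in> measurable M (count_space UNIV) \<and> (\<forall>\<omega>. L p t k \<omega> \<in> {1..m})) \<and>
     \<comment> \<open>(i)\<close>
     (\<forall>k \<in> {1..m}. W 0 0 k = (\<lambda>_. 1)) \<and>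
     prob_space.indep_vars M (\<lambda>_. X) (\<lambda>(k,i) \<omega>. \<xi> 0 0 k \<omega> i) ({1..m} \<times> {1..Np}) \<and>
     (\<forall>k \<in> {1..m}. \<forall>i \<in> {1..Np}. distr M X (\<lambda>\<omega>. \<xi> 0 0 k \<omega> i) = \<pi>0) \<and>
     \<comment> \<open>(ii)\<close>
     (\<forall>n. \<forall>k \<in> {1..m}. \<forall>\<omega>.
        W n 1 k \<omega> = W n 0 k \<omega> * ((1 / real Np) * (\<Sum>i=1..Np. g n (\<xi> n 0 k \<omega> i))) \<and>
        \<xi> n 1 k \<omega> = (\<lambda>i \<in> {1..Np}. \<xi> n 0 k \<omega> (J n k i \<omega>))) \<and>
     (\<forall>n S j. S \<subseteq> {1..m} \<times> {1..Np} \<longrightarrow> (\<forall>x \<in> S. j x \<in> {1..Np}) \<longrightarrow>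
        (AE \<omega> in M.
          cond_prob M (H (2 * \<tau> n 0)) {\<omega> \<in> space M. \<forall>(k,i) \<in> S. J n k i \<omega> = j (k,i)} \<omega>
            * (\<Prod>(k,i) \<in> S. (\<Sum>j'=1..Np. g n (\<xi> n 0 k \<omega> j')))
          = (\<Prod>(k,i) \<in> S. g n (\<xi> n 0 k \<omega> (j (k,i)))))) \<and>
     \<comment> \<open>(iii) with alpha_s = A_s\<close>
     (\<forall>n. \<forall>s \<in> {1..Sm}. \<forall>k \<in> {1..m}. \<forall>\<omega>.
        W n (s+1) k \<omega> = (\<Sum>l=1..m. A_entry s k l * W n s l \<omega>)) \<and>
     (\<forall>n. \<forall>s \<in> {1..Sm}. \<forall>S l. S \<subseteq> {1..m} \<longrightarrow> (\<forall>k \<in> S. l k \<in> {1..m}) \<longrightarrow>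
        (AE \<omega> in M.
          cond_prob M (H (2 * \<tau> n s)) {\<omega> \<in> space M. \<forall>k \<in> S. L n s k \<omega> = l k} \<omega>
            * (\<Prod>k \<in> S. W n (s+1) k \<omega>)
          = (\<Prod>k \<in> S. A_entry s k (l k) * W n s (l k) \<omega>))) \<and>
     (\<forall>n. \<forall>s. 1 \<le> s \<longrightarrow> s < Sm \<longrightarrow> (\<forall>k \<in> {1..m}. \<forall>\<omega>. \<xi> n (s+1) k \<omega> = \<xi> n s (L n s k \<omega>) \<omega>)) \<and>
     (\<forall>n. \<forall>k \<in> {1..m}. W (n+1) 0 k = W n (Sm+1) k) \<and>
     (\<forall>n. cond_law M (H (2 * \<tau> n Sm + 1))
            (\<lambda>\<omega>. \<lambda>k \<in> {1..m}. \<xi> (n+1) 0 k \<omega>)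
            (PiM {1..m} (\<lambda>_. blockM Np X))
            (\<lambda>\<omega>. PiM {1..m} (\<lambda>k. PiM {1..Np} (\<lambda>i. K (n+1) (\<xi> n Sm (L n Sm k \<omega>) \<omega> i))))))"

end

(*
  Condition backwards through the selection stages Sm-1, ..., s of time n.  Given the history just
  before stage t, the indices L_k = L^k_{n,t} of distinct filters are independent with
  P(L_k = l) W^k_{n,t+1} = A_t^{kl} W^l_{n,t}, and xi^k_{n,t+1} = xi^{L_k}_{n,t}.  Hence for filters
  a, b the conditional expectation of W^a_{n,t+1} W^b_{n,t+1} phi(xi^a_{n,t+1}, xi^b_{n,t+1}) is
  sum_{l,l'} A_t^{al} A_t^{bl'} W^l_{n,t} W^{l'}_{n,t} phi'(xi^l_{n,t}, xi^{l'}_{n,t}) with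
  phi' = phi if a ~= b; if a = b both blocks are the same selected block, so phi' = C_1 phi once
  one weight factor is re-expanded as W^a_{n,t+1} = sum_l A_t^{al} W^l_{n,t}.  One such step per
  stage turns the left-hand side into the sum over pairs of ancestral lineages i_s..i_Sm and
  j_s..j_Sm on the right, where the collision operator records whether the two lineages have met.
  That sum is G_{n,s}-measurable, and the tower property closes the argument.
*)
theory Submission
  imports Defs
begin

definition bounded_fun :: "('a \<Rightarrow> real) \<Rightarrow> bool" where
  "bounded_fun f \<longleftrightarrow> (\<exists>B. \<forall>x. \<bar>f x\<bar> \<le> B)"

lemma bounded_fun_const [intro]: "bounded_fun (\<lambda>_. c)"
  unfolding bounded_fun_def by blast

lemma bounded_fun_indicator [intro]: "bounded_fun (indicator E :: _ \<Rightarrow> real)"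
  unfolding bounded_fun_def by (rule exI[of _ 1]) (simp add: indicator_def)

lemma bounded_fun_compose2:
  "\<exists>B. \<forall>x y. \<bar>\<phi> x y\<bar> \<le> B \<Longrightarrow> bounded_fun (\<lambda>\<omega>. \<phi> (a \<omega>) (b \<omega>))"
  unfolding bounded_fun_def by blast

lemma bounded_fun_mult [intro]:
  assumes "bounded_fun f" "bounded_fun g"
  shows "bounded_fun (\<lambda>x. f x * g x)"
proof -
  obtain A B where "\<forall>x. \<bar>f x\<bar> \<le> A" "\<forall>x. \<bar>g x\<bar> \<le> B"
    using assms unfolding bounded_fun_def by blast
  then have "\<bar>f x * g x\<bar> \<le> A * B" for x
    unfolding abs_mult by (meson abs_ge_zero mult_mono order_trans)
  then show ?thesis unfolding bounded_fun_def by blast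
qed

lemma bounded_fun_add [intro]:
  assumes "bounded_fun f" "bounded_fun g"
  shows "bounded_fun (\<lambda>x. f x + g x)"
proof -
  obtain A B where "\<forall>x. \<bar>f x\<bar> \<le> A" "\<forall>x. \<bar>g x\<bar> \<le> B"
    using assms unfolding bounded_fun_def by blast
  then have "\<bar>f x + g x\<bar> \<le> A + B" for x
    by (meson abs_triangle_ineq add_mono order_trans)
  then show ?thesis unfolding bounded_fun_def by blast
qed

lemma bounded_fun_sum [intro]:
  "(\<And>i. i \<in> I \<Longrightarrow> bounded_fun (f i)) \<Longrightarrow> bounded_fun (\<lambda>x. \<Sum>i\<in>I. f i x)"
  by (induction I rule: infinite_finite_induct) auto

lemma (in finite_measure) integrable_bounded_fun:
  assumes "bounded_fun f" "f \<in> borel_measurable M"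
  shows "integrable M f"
proof -
  obtain B where "\<forall>x. \<bar>f x\<bar> \<le> B" using assms(1) unfolding bounded_fun_def by blast
  then show ?thesis by (intro integrable_const_bound[where B = B]) (auto simp: assms(2))
qed

lemma bounded_fun_prod [intro]:
  "(\<And>i. i \<in> I \<Longrightarrow> bounded_fun (f i)) \<Longrightarrow> bounded_fun (\<lambda>x. \<Prod>i\<in>I. f i x)"
  by (induction I rule: infinite_finite_induct) auto

lemma subalgebra_sigma:
  assumes "A \<subseteq> sets M"
  shows "subalgebra M (sigma (space M) A)"
proof -
  have "A \<subseteq> Pow (space M)" using assms sets.sets_into_space by blast
  then show ?thesis unfolding subalgebra_def using assms by (simp add: sets.sigma_sets_subset)
qed

lemma subalgebra_sigma_mono:
  assumes "A \<subseteq> B" "B \<subseteq> Pow \<Omega>"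
  shows "subalgebra (sigma \<Omega> B) (sigma \<Omega> A)"
  using assms unfolding subalgebra_def by (simp add: sigma_sets_mono')

lemma gens_subset_sets: "Y \<in> measurable M N \<Longrightarrow> gens M Y N \<subseteq> sets M"
  unfolding gens_def by (auto intro: measurable_sets)

lemma measurable_sigma_gens:
  assumes "Y \<in> measurable M N" "gens M Y N \<subseteq> A" "A \<subseteq> Pow (space M)"
  shows "Y \<in> measurable (sigma (space M) A) N"
proof (rule measurableI)
  show "Y x \<in> space N" if "x \<in> space (sigma (space M) A)" for x
    using that assms(1,3) measurable_space by auto
  show "Y -` B \<inter> space (sigma (space M) A) \<in> sets (sigma (space M) A)" if "B \<in> sets N" for B
    using that assms(2,3) unfolding gens_def by auto
qed

lemma Union_Collect_mono:
  "(\<And>p t k. P p t k \<Longrightarrow> Q p t k) \<Longrightarrow> \<Union>{f p t k | p t k. P p t k} \<subseteq> \<Union>{f p t k | p t k. Q p t k}"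
  by blast

lemma (in prob_space) sigma_finite_subalgebra_of:
  "subalgebra M F \<Longrightarrow> sigma_finite_subalgebra M F"
  by (intro finite_measure_subalgebra_is_sigma_finite finite_measure_subalgebra.intro
      finite_measure_axioms) (simp add: finite_measure_subalgebra_axioms_def)

context sigma_finite_subalgebra
begin

lemma real_cond_exp_sum_on:
  assumes "\<And>i. i \<in> I \<Longrightarrow> integrable M (f i)"
  shows "AE x in M. real_cond_exp M F (\<lambda>x. \<Sum>i\<in>I. f i x) x = (\<Sum>i\<in>I. real_cond_exp M F (f i) x)"
proof -
  define f' where "f' i = (if i \<in> I then f i else (\<lambda>_. 0))" for i
  have "AE x in M. real_cond_exp M F (\<lambda>x. \<Sum>i\<in>I. f' i x) x = (\<Sum>i\<in>I. real_cond_exp M F (f' i) x)"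
    by (rule real_cond_exp_sum) (simp add: f'_def assms)
  moreover have "(\<Sum>i\<in>I. f' i x) = (\<Sum>i\<in>I. f i x)"
    "(\<Sum>i\<in>I. real_cond_exp M F (f' i) x) = (\<Sum>i\<in>I. real_cond_exp M F (f i) x)" for x
    unfolding f'_def by (auto intro: sum.cong)
  ultimately show ?thesis by simp
qed

lemma real_cond_exp_double_sum:
  assumes "finite I" "\<And>i j. i \<in> I \<Longrightarrow> j \<in> J \<Longrightarrow> integrable M (f i j)"
  shows "AE x in M. real_cond_exp M F (\<lambda>x. \<Sum>i\<in>I. \<Sum>j\<in>J. f i j x) x
    = (\<Sum>i\<in>I. \<Sum>j\<in>J. real_cond_exp M F (f i j) x)"
proof -
  have "AE x in M. real_cond_exp M F (\<lambda>x. \<Sum>i\<in>I. \<Sum>j\<in>J. f i j x) x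
      = (\<Sum>i\<in>I. real_cond_exp M F (\<lambda>x. \<Sum>j\<in>J. f i j x) x)"
    using assms(2) by (intro real_cond_exp_sum_on) auto
  moreover have "AE x in M. \<forall>i\<in>I. real_cond_exp M F (\<lambda>x. \<Sum>j\<in>J. f i j x) x
      = (\<Sum>j\<in>J. real_cond_exp M F (f i j) x)"
    using assms by (intro AE_finite_allI real_cond_exp_sum_on) auto
  ultimately show ?thesis by eventually_elim simp
qed

lemma real_cond_exp_mult_indicator:
  assumes "Z \<in> borel_measurable F" "E \<in> sets M" "integrable M (\<lambda>x. Z x * indicator E x)"
  shows "AE x in M. real_cond_exp M F (\<lambda>x. Z x * indicator E x) x = Z x * cond_prob M F E x"
  unfolding cond_prob_def using assms by (intro real_cond_exp_mult) auto

end

section \<open>Sums over ancestral lineages\<close>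

lemma sum_PiE_insert:
  assumes "x \<notin> S"
  shows "(\<Sum>i\<in>PiE (insert x S) T. f i) = (\<Sum>y\<in>T x. \<Sum>i\<in>PiE S T. f (i(x := y)))"
proof -
  have "(\<Sum>i\<in>PiE (insert x S) T. f i) = (\<Sum>(y, i)\<in>T x \<times> PiE S T. f (i(x := y)))"
    unfolding PiE_insert_eq
    by (subst sum.reindex[OF inj_combinator[OF assms]]) (simp add: case_prod_unfold)
  then show ?thesis by (simp add: sum.cartesian_product)
qed

lemma sum_PiE_singleton: "(\<Sum>l\<in>PiE {a} (\<lambda>_. R). f (l a)) = (\<Sum>x\<in>R. f x)"
  by (simp add: sum_PiE_insert[of a "{}", simplified])

lemma sum_PiE_pair:
  assumes "a \<noteq> b"
  shows "(\<Sum>l\<in>PiE {a, b} (\<lambda>_. R). f (l a) (l b)) = (\<Sum>x\<in>R. \<Sum>y\<in>R. f x y)"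
  using assms by (simp add: sum_PiE_insert sum_PiE_singleton)

lemma coll_single: "coll [a] [b] \<phi> = (if a = b then C1 \<phi> else \<phi>)"
  by (simp add: coll_def C0_def)

lemma coll_Cons:
  assumes "length xs = length ys"
  shows "coll (x # xs) (y # ys) \<psi> = coll [x] [y] (coll xs ys \<psi>)"
proof -
  have "(\<exists>k < length (x # xs). (x # xs) ! k = (y # ys) ! k)
      \<longleftrightarrow> x = y \<or> (\<exists>k < length xs. xs ! k = ys ! k)"
    by (auto simp: less_Suc_eq_0_disj)
  moreover have "C1 (C1 \<psi>) = C1 \<psi>" by (intro ext) (simp add: C1_def)
  ultimately show ?thesis by (auto simp: coll_def C0_def)
qed

lemma coll_measurable:
  assumes "(\<lambda>(x, y). \<phi> x y) \<in> borel_measurable (N \<Otimes>\<^sub>M N)"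
  shows "(\<lambda>(x, y). coll as bs \<phi> x y) \<in> borel_measurable (N \<Otimes>\<^sub>M N)"
proof -
  have "(\<lambda>(x, y). C1 \<phi> x y) = (\<lambda>z. (\<lambda>(x, y). \<phi> x y) (fst z, fst z))"
    by (auto simp: C1_def)
  also have "\<dots> \<in> borel_measurable (N \<Otimes>\<^sub>M N)"
    using assms by measurable
  finally show ?thesis using assms by (simp add: coll_def C0_def)
qed

lemma coll_bounded:
  "\<exists>B. \<forall>x y. \<bar>\<phi> x y\<bar> \<le> B \<Longrightarrow> \<exists>B. \<forall>x y. \<bar>coll as bs \<phi> x y\<bar> \<le> B"
  unfolding coll_def C0_def C1_def by auto

text \<open>\<open>lineage_sum \<dots> t\<close> is the right-hand side of the theorem with \<open>s\<close> replaced by \<open>t\<close>: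
  \<open>i\<close> and \<open>j\<close> run over the ancestral lineages, from stage \<open>t\<close> on, of the filters \<open>i_top\<close>
  and \<open>j_top\<close>.\<close>

definition lineage_weight :: "nat \<Rightarrow> nat \<Rightarrow> nat \<Rightarrow> nat \<Rightarrow> (nat \<Rightarrow> nat) \<Rightarrow> (nat \<Rightarrow> nat) \<Rightarrow> real" where
  "lineage_weight Sm i_top j_top t i j =
     (\<Prod>q = t..Sm. A_entry q ((i(Sm+1 := i_top)) (q+1)) (i q)
                 * A_entry q ((j(Sm+1 := j_top)) (q+1)) (j q))"

definition lineage_term :: "(nat \<Rightarrow> nat \<Rightarrow> nat \<Rightarrow> 'a \<Rightarrow> real) \<Rightarrow> (nat \<Rightarrow> nat \<Rightarrow> nat \<Rightarrow> 'a \<Rightarrow> 'b)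
    \<Rightarrow> ('b \<Rightarrow> 'b \<Rightarrow> real) \<Rightarrow> nat \<Rightarrow> nat \<Rightarrow> nat \<Rightarrow> nat \<Rightarrow> nat \<Rightarrow> (nat \<Rightarrow> nat) \<Rightarrow> (nat \<Rightarrow> nat) \<Rightarrow> 'a \<Rightarrow> real" where
  "lineage_term W \<xi> \<psi> Sm n i_top j_top t i j \<omega> =
     lineage_weight Sm i_top j_top t i j * W n t (i t) \<omega> * W n t (j t) \<omega>
     * coll (map i [t+1..<Sm+1]) (map j [t+1..<Sm+1]) \<psi> (\<xi> n t (i t) \<omega>) (\<xi> n t (j t) \<omega>)"

definition lineage_sum :: "(nat \<Rightarrow> nat \<Rightarrow> nat \<Rightarrow> 'a \<Rightarrow> real) \<Rightarrow> (nat \<Rightarrow> nat \<Rightarrow> nat \<Rightarrow> 'a \<Rightarrow> 'b)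
    \<Rightarrow> ('b \<Rightarrow> 'b \<Rightarrow> real) \<Rightarrow> nat \<Rightarrow> nat \<Rightarrow> nat \<Rightarrow> nat \<Rightarrow> nat \<Rightarrow> 'a \<Rightarrow> real" where
  "lineage_sum W \<xi> \<psi> Sm n i_top j_top t \<omega> =
     (\<Sum>i\<in>PiE {t..Sm} (\<lambda>_. {1..2^Sm}). \<Sum>j\<in>PiE {t..Sm} (\<lambda>_. {1..2^Sm}).
        lineage_term W \<xi> \<psi> Sm n i_top j_top t i j \<omega>)"

lemma lineage_sum_top:
  "lineage_sum W \<xi> \<psi> Sm n i_top j_top Sm \<omega> =
     (\<Sum>i\<in>{1..2^Sm}. \<Sum>j\<in>{1..2^Sm}. A_entry Sm i_top i * A_entry Sm j_top j
        * W n Sm i \<omega> * W n Sm j \<omega> * \<psi> (\<xi> n Sm i \<omega>) (\<xi> n Sm j \<omega>))"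
  by (simp add: lineage_sum_def lineage_term_def lineage_weight_def coll_def C0_def
      sum_PiE_insert[of Sm "{}", simplified])

lemma lineage_weight_extend:
  assumes "t < Sm"
  shows "lineage_weight Sm i_top j_top t (i(t := l)) (j(t := l')) =
    A_entry t (i (Suc t)) l * A_entry t (j (Suc t)) l' * lineage_weight Sm i_top j_top (Suc t) i j"
  unfolding lineage_weight_def using assms
  by (subst prod.atLeast_Suc_atMost) (auto intro!: prod.cong)

lemma lineage_term_extend:
  assumes "t < Sm"
  shows "lineage_term W \<xi> \<psi> Sm n i_top j_top t (i(t := l)) (j(t := l')) \<omega> =
    lineage_weight Sm i_top j_top (Suc t) i j
    * (A_entry t (i (Suc t)) l * A_entry t (j (Suc t)) l' * W n t l \<omega> * W n t l' \<omega>
       * coll [i (Suc t)] [j (Suc t)]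
           (coll (map i [Suc (Suc t)..<Sm+1]) (map j [Suc (Suc t)..<Sm+1]) \<psi>)
           (\<xi> n t l \<omega>) (\<xi> n t l' \<omega>))"
proof -
  have map_upd: "map (f(t := x)) [t+1..<Sm+1] = map f [t+1..<Sm+1]" for f :: "nat \<Rightarrow> nat" and x
    by (rule map_cong) auto
  have upt: "[t+1..<Sm+1] = Suc t # [Suc (Suc t)..<Sm+1]"
    using assms by (simp add: upt_conv_Cons)
  show ?thesis
    unfolding lineage_term_def lineage_weight_extend[OF assms] map_upd upt list.map
    by (subst coll_Cons) (simp_all add: mult_ac)
qed

lemma lineage_sum_split:
  assumes "t < Sm"
  shows "lineage_sum W \<xi> \<psi> Sm n i_top j_top t \<omega> =
    (\<Sum>i\<in>PiE {Suc t..Sm} (\<lambda>_. {1..2^Sm}). \<Sum>j\<in>PiE {Suc t..Sm} (\<lambda>_. {1..2^Sm}).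
      lineage_weight Sm i_top j_top (Suc t) i j *
      (\<Sum>l\<in>{1..2^Sm}. \<Sum>l'\<in>{1..2^Sm}.
         A_entry t (i (Suc t)) l * A_entry t (j (Suc t)) l' * W n t l \<omega> * W n t l' \<omega>
         * coll [i (Suc t)] [j (Suc t)]
             (coll (map i [Suc (Suc t)..<Sm+1]) (map j [Suc (Suc t)..<Sm+1]) \<psi>)
             (\<xi> n t l \<omega>) (\<xi> n t l' \<omega>)))"
proof -
  let ?P = "PiE {Suc t..Sm} (\<lambda>_. {1..2^Sm::nat})" and ?R = "{1..2^Sm::nat}"
  let ?f = "lineage_term W \<xi> \<psi> Sm n i_top j_top t"
  have "{t..Sm} = insert t {Suc t..Sm}" using assms by auto
  then have "lineage_sum W \<xi> \<psi> Sm n i_top j_top t \<omega>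
      = (\<Sum>l\<in>?R. \<Sum>i\<in>?P. \<Sum>l'\<in>?R. \<Sum>j\<in>?P. ?f (i(t := l)) (j(t := l')) \<omega>)"
    by (simp add: lineage_sum_def sum_PiE_insert)
  also have "\<dots> = (\<Sum>l\<in>?R. \<Sum>i\<in>?P. \<Sum>j\<in>?P. \<Sum>l'\<in>?R. ?f (i(t := l)) (j(t := l')) \<omega>)"
    by (simp only: sum.swap[of _ ?R ?P])
  also have "\<dots> = (\<Sum>i\<in>?P. \<Sum>j\<in>?P. \<Sum>l\<in>?R. \<Sum>l'\<in>?R. ?f (i(t := l)) (j(t := l')) \<omega>)"
    by (subst sum.swap) (simp only: sum.swap[of _ ?R ?P])
  finally show ?thesis
    using assms by (simp add: lineage_term_extend sum_distrib_left)
qed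

section \<open>The interacting filters\<close>

text \<open>The properties of the AIRPF that the proof uses; the initial law, the mutation kernels and
  the law of the resampling indices \<open>J\<close> play no role.\<close>

locale airpf_run =
  fixes M :: "'a measure" and X :: "'x measure" and g :: "nat \<Rightarrow> 'x \<Rightarrow> real"
    and Sm Np :: nat
    and \<xi> :: "nat \<Rightarrow> nat \<Rightarrow> nat \<Rightarrow> 'a \<Rightarrow> nat \<Rightarrow> 'x"
    and W :: "nat \<Rightarrow> nat \<Rightarrow> nat \<Rightarrow> 'a \<Rightarrow> real"
    and J L :: "nat \<Rightarrow> nat \<Rightarrow> nat \<Rightarrow> 'a \<Rightarrow> nat"
  assumes prob_space_M: "prob_space M"
    and g_measurable: "\<And>p. g p \<in> borel_measurable X"
    and g_bounded: "\<And>p. \<exists>B. \<forall>x. \<bar>g p x\<bar> \<le> B"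
    and measurable_xi: "\<And>p t k. t \<le> Sm \<Longrightarrow> k \<in> {1..2^Sm} \<Longrightarrow> \<xi> p t k \<in> measurable M (blockM Np X)"
    and measurable_J: "\<And>p k i. J p k i \<in> measurable M (count_space UNIV)"
    and measurable_L: "\<And>p t k. L p t k \<in> measurable M (count_space UNIV)"
    and L_range: "\<And>p t k \<omega>. L p t k \<omega> \<in> {1..2^Sm}"
    and W_initial: "\<And>k \<omega>. k \<in> {1..2^Sm} \<Longrightarrow> W 0 0 k \<omega> = 1"
    and W_reweight: "\<And>p k \<omega>. k \<in> {1..2^Sm} \<Longrightarrow>
      W p 1 k \<omega> = W p 0 k \<omega> * ((1 / real Np) * (\<Sum>i=1..Np. g p (\<xi> p 0 k \<omega> i)))"
    and W_interact: "\<And>p t k \<omega>. t \<in> {1..Sm} \<Longrightarrow> k \<in> {1..2^Sm} \<Longrightarrow>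
      W p (t+1) k \<omega> = (\<Sum>l=1..2^Sm. A_entry t k l * W p t l \<omega>)"
    and W_next_time: "\<And>p k \<omega>. k \<in> {1..2^Sm} \<Longrightarrow> W (p+1) 0 k \<omega> = W p (Sm+1) k \<omega>"
    and xi_select: "\<And>p t k \<omega>. 1 \<le> t \<Longrightarrow> t < Sm \<Longrightarrow> k \<in> {1..2^Sm} \<Longrightarrow>
      \<xi> p (t+1) k \<omega> = \<xi> p t (L p t k \<omega>) \<omega>"
    and L_selection_law: "\<And>p t S l. t \<in> {1..Sm} \<Longrightarrow> S \<subseteq> {1..2^Sm} \<Longrightarrow>
      (\<forall>k\<in>S. l k \<in> {1..2^Sm}) \<Longrightarrow>
      AE \<omega> in M. cond_prob M (H_alg M X Sm Np \<xi> J L (2 * ((Sm+1)*p + t)))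
          {\<omega> \<in> space M. \<forall>k\<in>S. L p t k \<omega> = l k} \<omega>
        * (\<Prod>k\<in>S. W p (t+1) k \<omega>)
      = (\<Prod>k\<in>S. A_entry t k (l k) * W p t (l k) \<omega>)"

lemma airpf_run_if_airpf:
  assumes "airpf M X \<pi>0 K g Sm Np \<xi> W J L"
  shows "airpf_run M X g Sm Np \<xi> W J L"
proof -
  have "\<exists>B. \<forall>x. \<bar>g p x\<bar> \<le> B" for p
  proof -
    have "(\<forall>x. 0 \<le> g p x) \<and> (\<exists>B. \<forall>x. g p x \<le> B)"
      using assms unfolding airpf_def Let_def by (elim conjE) blast
    then show ?thesis by force
  qed
  with assms show ?thesis
    unfolding airpf_def airpf_run_def Let_def by (elim conjE) (intro conjI allI impI; simp)
qed

context airpf_run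
begin

abbreviation filters :: "nat set" where
  "filters \<equiv> {1..2^Sm}"

abbreviation G :: "nat \<Rightarrow> nat \<Rightarrow> 'a measure" where
  "G \<equiv> G_alg M X Sm Np \<xi>"

text \<open>The history up to the blocks of stage \<open>(n, t)\<close>, before the indices \<open>L n t\<close> are drawn.\<close>

abbreviation past :: "nat \<Rightarrow> nat \<Rightarrow> 'a measure" where
  "past n t \<equiv> H_alg M X Sm Np \<xi> J L (2 * ((Sm+1)*n + t))"

lemma G_generators_subset:
  "\<Union>{gens M (\<xi> p t k) (blockM Np X) | p t k. t \<le> Sm \<and> k \<in> filters \<and> P p t} \<subseteq> sets M"
  using gens_subset_sets[OF measurable_xi] by blast

lemma subalgebra_G: "subalgebra M (G n s)"
  unfolding G_alg_def by (rule subalgebra_sigma[OF G_generators_subset])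

lemma H_generators_subset:
  "\<Union>{gens M (\<xi> p t k) (blockM Np X) | p t k. t \<le> Sm \<and> k \<in> filters \<and> 2*((Sm+1)*p + t) \<le> c}
   \<union> \<Union>{gens M (J p k i) (count_space UNIV) | p k i.
        k \<in> filters \<and> i \<in> {1..Np} \<and> 2*((Sm+1)*p + 1) \<le> c}
   \<union> \<Union>{gens M (L p t k) (count_space UNIV) | p t k.
        t \<in> {1..Sm} \<and> k \<in> filters \<and> 2*((Sm+1)*p + t) + 1 \<le> c} \<subseteq> sets M"
  using gens_subset_sets[OF measurable_xi] gens_subset_sets[OF measurable_J]
    gens_subset_sets[OF measurable_L] by blast

lemma subalgebra_past: "subalgebra M (H_alg M X Sm Np \<xi> J L c)"
  unfolding H_alg_def by (rule subalgebra_sigma[OF H_generators_subset])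

lemma subalgebra_G_G:
  assumes "(Sm+1)*p + t \<le> (Sm+1)*n + s"
  shows "subalgebra (G n s) (G p t)"
  unfolding G_alg_def
  by (rule subalgebra_sigma_mono[OF Union_Collect_mono
        order_trans[OF G_generators_subset sets.space_closed]])
     (use assms in auto)

lemma subalgebra_past_G:
  assumes "s \<le> t"
  shows "subalgebra (past n t) (G n s)"
  unfolding G_alg_def H_alg_def
  by (rule subalgebra_sigma_mono[OF
        order_trans[OF Union_Collect_mono order_trans[OF Un_upper1 Un_upper1]]
        order_trans[OF H_generators_subset sets.space_closed]])
     (use assms in auto)

lemma sigma_finite_G: "sigma_finite_subalgebra M (G n s)"
  by (rule prob_space.sigma_finite_subalgebra_of[OF prob_space_M subalgebra_G])

lemma sigma_finite_past: "sigma_finite_subalgebra M (past n t)"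
  by (rule prob_space.sigma_finite_subalgebra_of[OF prob_space_M subalgebra_past])

lemma measurable_xi_G:
  assumes "t \<le> Sm" "k \<in> filters" "(Sm+1)*p + t \<le> (Sm+1)*n + s"
  shows "\<xi> p t k \<in> measurable (G n s) (blockM Np X)"
  unfolding G_alg_def
  by (rule measurable_sigma_gens[OF measurable_xi _
        order_trans[OF G_generators_subset sets.space_closed]])
     (use assms in blast)+

lemma measurable_xi_past: "t \<le> Sm \<Longrightarrow> k \<in> filters \<Longrightarrow> \<xi> n t k \<in> measurable (past n t) (blockM Np X)"
  by (rule measurable_from_subalg[OF subalgebra_past_G[OF order_refl] measurable_xi_G]) auto

lemma W_measurable_bounded_stages:
  assumes base: "\<And>k. k \<in> filters \<Longrightarrow> W p 0 k \<in> borel_measurable (G p 0) \<and> bounded_fun (W p 0 k)"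
  shows "t \<le> Suc Sm \<Longrightarrow> k \<in> filters \<Longrightarrow> W p t k \<in> borel_measurable (G p 0) \<and> bounded_fun (W p t k)"
proof (induction t arbitrary: k)
  case 0
  from 0(2) show ?case by (rule base)
next
  case (Suc t)
  show ?case
  proof (cases "t = 0")
    case True
    have particle: "(\<lambda>\<omega>. \<xi> p 0 k \<omega> i) \<in> measurable (G p 0) X" if "i \<in> {1..Np}" for i
      using measurable_xi_G[of 0 k p p 0] Suc.prems that unfolding blockM_def
      by (auto intro: measurable_compose[OF _ measurable_component_singleton])
    have "(\<lambda>\<omega>. g p (\<xi> p 0 k \<omega> i)) \<in> borel_measurable (G p 0)" if "i \<in> {1..Np}" for i
      using particle[OF that] by (rule measurable_compose[OF _ g_measurable])
    moreover have "bounded_fun (\<lambda>\<omega>. g p (\<xi> p 0 k \<omega> i))" for i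
      using g_bounded[of p] unfolding bounded_fun_def by blast
    moreover have
      "W p (Suc t) k = (\<lambda>\<omega>. W p 0 k \<omega> * ((1 / real Np) * (\<Sum>i=1..Np. g p (\<xi> p 0 k \<omega> i))))"
      using W_reweight Suc.prems True by auto
    ultimately show ?thesis
      using base[OF Suc.prems(2)]
      by (simp only:) (intro conjI borel_measurable_times borel_measurable_const
          borel_measurable_sum bounded_fun_mult bounded_fun_const bounded_fun_sum; simp)
  next
    case False
    with Suc.prems have "t \<in> {1..Sm}" by auto
    then have "W p (Suc t) k = (\<lambda>\<omega>. \<Sum>l\<in>filters. A_entry t k l * W p t l \<omega>)"
      using W_interact Suc.prems by auto
    then show ?thesis
      using Suc.IH Suc.prems
      by (simp only:) (intro conjI borel_measurable_times borel_measurable_const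
          borel_measurable_sum bounded_fun_mult bounded_fun_const bounded_fun_sum; simp)
  qed
qed

text \<open>No selection index enters the weights: those of time \<open>p\<close> are functions of the blocks
  \<open>\<xi> p 0\<close> and of the weights of time \<open>p - 1\<close>.\<close>

lemma W_measurable_bounded:
  "t \<le> Suc Sm \<Longrightarrow> k \<in> filters \<Longrightarrow> W p t k \<in> borel_measurable (G p 0) \<and> bounded_fun (W p t k)"
proof (induction p arbitrary: t k)
  case 0
  have "W 0 0 k \<in> borel_measurable (G 0 0) \<and> bounded_fun (W 0 0 k)" if "k \<in> filters" for k
  proof -
    have "W 0 0 k = (\<lambda>_. 1)" using W_initial that by auto
    then show ?thesis by auto
  qed
  from this 0 show ?case by (rule W_measurable_bounded_stages)
next
  case (Suc p)
  have "W (Suc p) 0 k \<in> borel_measurable (G (Suc p) 0) \<and> bounded_fun (W (Suc p) 0 k)"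
    if "k \<in> filters" for k
  proof -
    have "W (Suc p) 0 k = W p (Suc Sm) k"
      using W_next_time that by auto
    moreover have "subalgebra (G (Suc p) 0) (G p 0)"
      by (rule subalgebra_G_G) simp
    ultimately show ?thesis
      using Suc.IH[of "Suc Sm" k] that measurable_from_subalg by auto
  qed
  from this Suc.prems show ?case by (rule W_measurable_bounded_stages)
qed

lemma W_bounded: "t \<le> Suc Sm \<Longrightarrow> k \<in> filters \<Longrightarrow> bounded_fun (W p t k)"
  using W_measurable_bounded by blast

lemma W_measurable_G:
  assumes "t \<le> Suc Sm" "k \<in> filters" "(Sm+1)*p \<le> (Sm+1)*n + s"
  shows "W p t k \<in> borel_measurable (G n s)"
  by (rule measurable_from_subalg[OF subalgebra_G_G[of p 0 n s]])
     (use assms in \<open>auto simp: W_measurable_bounded\<close>)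

lemma W_measurable_past: "t' \<le> Suc Sm \<Longrightarrow> k \<in> filters \<Longrightarrow> W n t' k \<in> borel_measurable (past n t)"
  using W_measurable_G[of t' k n n 0] measurable_from_subalg[OF subalgebra_past_G[of 0 t n]] by simp

lemma W_measurable: "t \<le> Suc Sm \<Longrightarrow> k \<in> filters \<Longrightarrow> W p t k \<in> borel_measurable M"
  using W_measurable_G[of t k p p 0] measurable_from_subalg[OF subalgebra_G] by simp

section \<open>Conditioning on a selection stage\<close>

declare measurable_L [measurable]

text \<open>The weights \<open>W n (Suc t) k\<close> in front cancel the denominators of the selection law, so no
  positivity of the weights is needed.\<close>

lemma cond_exp_selection:
  assumes t: "t \<in> {1..Sm}" and S: "S \<subseteq> filters"
    and F_meas: "\<And>l. l \<in> PiE S (\<lambda>_. filters) \<Longrightarrow> F l \<in> borel_measurable (past n t)"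
    and F_bounded: "\<And>l. l \<in> PiE S (\<lambda>_. filters) \<Longrightarrow> bounded_fun (F l)"
  shows "AE \<omega> in M. real_cond_exp M (past n t)
      (\<lambda>\<omega>. (\<Prod>k\<in>S. W n (Suc t) k \<omega>) * F (restrict (\<lambda>k. L n t k \<omega>) S) \<omega>) \<omega>
    = (\<Sum>l\<in>PiE S (\<lambda>_. filters). (\<Prod>k\<in>S. A_entry t k (l k) * W n t (l k) \<omega>) * F l \<omega>)"
proof -
  interpret sigma_finite_subalgebra M "past n t" by (rule sigma_finite_past)
  interpret prob_space M by (rule prob_space_M)
  let ?P = "PiE S (\<lambda>_. filters)"
  define E where "E l = {\<omega> \<in> space M. \<forall>k\<in>S. L n t k \<omega> = l k}" for l
  define Z where "Z l \<omega> = (\<Prod>k\<in>S. W n (Suc t) k \<omega>) * F l \<omega>" for l \<omega>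
  have fin: "finite S" "finite ?P"
    using S finite_subset by (auto intro: finite_PiE)
  have E_sets: "E l \<in> sets M" for l
    unfolding E_def using fin(1) by measurable
  have Z_meas: "Z l \<in> borel_measurable (past n t)" if "l \<in> ?P" for l
    unfolding Z_def using S t that F_meas
    by (intro borel_measurable_times borel_measurable_prod W_measurable_past) auto
  have Z_bounded: "bounded_fun (Z l)" if "l \<in> ?P" for l
    unfolding Z_def using S t that
    by (intro bounded_fun_mult bounded_fun_prod W_bounded F_bounded) auto
  have ZE_int: "integrable M (\<lambda>\<omega>. Z l \<omega> * indicator (E l) \<omega>)" if "l \<in> ?P" for l
    using Z_meas[OF that] Z_bounded[OF that] E_sets measurable_from_subalg[OF subalg]
    by (intro integrable_bounded_fun bounded_fun_mult bounded_fun_indicator borel_measurable_times)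
       auto
  have decomp: "(\<Prod>k\<in>S. W n (Suc t) k \<omega>) * F (restrict (\<lambda>k. L n t k \<omega>) S) \<omega>
      = (\<Sum>l\<in>?P. Z l \<omega> * indicator (E l) \<omega>)" if "\<omega> \<in> space M" for \<omega>
  proof -
    let ?r = "restrict (\<lambda>k. L n t k \<omega>) S"
    have "\<omega> \<in> E l \<longleftrightarrow> l = ?r" if "l \<in> ?P" for l
      using that \<open>\<omega> \<in> space M\<close> by (auto simp: E_def PiE_iff extensional_def fun_eq_iff)
    then have "(\<Sum>l\<in>?P. Z l \<omega> * indicator (E l) \<omega>) = (\<Sum>l\<in>?P. if l = ?r then Z l \<omega> else 0)"
      by (intro sum.cong) (auto simp: indicator_def)
    also have "\<dots> = Z ?r \<omega>"
      using L_range fin by (simp add: sum.delta)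
    finally show ?thesis by (simp add: Z_def)
  qed
  have "AE \<omega> in M. real_cond_exp M (past n t)
      (\<lambda>\<omega>. (\<Prod>k\<in>S. W n (Suc t) k \<omega>) * F (restrict (\<lambda>k. L n t k \<omega>) S) \<omega>) \<omega>
    = real_cond_exp M (past n t) (\<lambda>\<omega>. \<Sum>l\<in>?P. Z l \<omega> * indicator (E l) \<omega>) \<omega>"
  proof (rule real_cond_exp_cong)
    have "(\<lambda>\<omega>. \<Sum>l\<in>?P. Z l \<omega> * indicator (E l) \<omega>) \<in> borel_measurable M"
      using ZE_int by (intro borel_measurable_sum) auto
    then show "(\<lambda>\<omega>. (\<Prod>k\<in>S. W n (Suc t) k \<omega>) * F (restrict (\<lambda>k. L n t k \<omega>) S) \<omega>)
        \<in> borel_measurable M"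
      by (subst measurable_cong[OF decomp]) auto
  qed (use decomp ZE_int in auto)
  moreover have "AE \<omega> in M. real_cond_exp M (past n t) (\<lambda>\<omega>. \<Sum>l\<in>?P. Z l \<omega> * indicator (E l) \<omega>) \<omega>
      = (\<Sum>l\<in>?P. real_cond_exp M (past n t) (\<lambda>\<omega>. Z l \<omega> * indicator (E l) \<omega>) \<omega>)"
    using ZE_int by (rule real_cond_exp_sum_on)
  moreover have "AE \<omega> in M. \<forall>l\<in>?P. real_cond_exp M (past n t) (\<lambda>\<omega>. Z l \<omega> * indicator (E l) \<omega>) \<omega>
      = Z l \<omega> * cond_prob M (past n t) (E l) \<omega>"
    using Z_meas E_sets ZE_int by (intro AE_finite_allI fin real_cond_exp_mult_indicator) auto
  moreover have "AE \<omega> in M. \<forall>l\<in>?P. cond_prob M (past n t) (E l) \<omega> * (\<Prod>k\<in>S. W n (Suc t) k \<omega>)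
      = (\<Prod>k\<in>S. A_entry t k (l k) * W n t (l k) \<omega>)"
    unfolding E_def
  proof (intro AE_finite_allI fin)
    fix l assume "l \<in> ?P"
    then have "\<forall>k\<in>S. l k \<in> filters" by auto
    then show "AE \<omega> in M. cond_prob M (past n t) {\<omega> \<in> space M. \<forall>k\<in>S. L n t k \<omega> = l k} \<omega>
        * (\<Prod>k\<in>S. W n (Suc t) k \<omega>) = (\<Prod>k\<in>S. A_entry t k (l k) * W n t (l k) \<omega>)"
      using L_selection_law[of t S l n] t S by simp
  qed
  ultimately show ?thesis
    by eventually_elim (auto simp: Z_def mult_ac intro!: sum.cong)
qed

lemma cond_exp_pair_selection:
  assumes t: "1 \<le> t" "t < Sm" and a: "a \<in> filters" and b: "b \<in> filters"
    and \<phi>_meas: "(\<lambda>(x, y). \<phi> x y) \<in> borel_measurable (blockM Np X \<Otimes>\<^sub>M blockM Np X)"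
    and \<phi>_bounded: "\<exists>B. \<forall>x y. \<bar>\<phi> x y\<bar> \<le> B"
  shows "AE \<omega> in M. real_cond_exp M (past n t)
      (\<lambda>\<omega>. W n (Suc t) a \<omega> * W n (Suc t) b \<omega> * \<phi> (\<xi> n (Suc t) a \<omega>) (\<xi> n (Suc t) b \<omega>)) \<omega>
    = (\<Sum>l\<in>filters. \<Sum>l'\<in>filters. A_entry t a l * A_entry t b l' * W n t l \<omega> * W n t l' \<omega>
        * coll [a] [b] \<phi> (\<xi> n t l \<omega>) (\<xi> n t l' \<omega>))"
proof -
  have t': "t \<in> {1..Sm}" "Suc t \<le> Suc Sm" using t by auto
  have \<phi>_xi_meas: "(\<lambda>\<omega>. \<phi> (\<xi> n t l \<omega>) (\<xi> n t l' \<omega>)) \<in> borel_measurable (past n t)"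
    if "l \<in> filters" "l' \<in> filters" for l l'
    by (rule measurable_Pair_compose_split[OF \<phi>_meas]) (use measurable_xi_past that t in auto)
  have \<phi>_xi_bounded: "bounded_fun (\<lambda>\<omega>. \<phi> (\<xi> n t l \<omega>) (\<xi> n t l' \<omega>))" for l l'
    using \<phi>_bounded by (rule bounded_fun_compose2)
  show ?thesis
  proof (cases "a = b")
    case False
    have "(\<lambda>\<omega>. W n (Suc t) a \<omega> * W n (Suc t) b \<omega> * \<phi> (\<xi> n (Suc t) a \<omega>) (\<xi> n (Suc t) b \<omega>))
      = (\<lambda>\<omega>. (\<Prod>k\<in>{a, b}. W n (Suc t) k \<omega>)
              * (\<lambda>l \<omega>. \<phi> (\<xi> n t (l a) \<omega>) (\<xi> n t (l b) \<omega>)) (restrict (\<lambda>k. L n t k \<omega>) {a, b}) \<omega>)"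
      using False xi_select t a b by simp
    moreover have "AE \<omega> in M. real_cond_exp M (past n t) \<dots> \<omega>
      = (\<Sum>l\<in>PiE {a, b} (\<lambda>_. filters). (\<Prod>k\<in>{a, b}. A_entry t k (l k) * W n t (l k) \<omega>)
          * \<phi> (\<xi> n t (l a) \<omega>) (\<xi> n t (l b) \<omega>))"
      using a b by (intro cond_exp_selection t' \<phi>_xi_meas \<phi>_xi_bounded) (auto simp: PiE_iff)
    moreover have "(\<Sum>l\<in>PiE {a, b} (\<lambda>_. filters). (\<Prod>k\<in>{a, b}. A_entry t k (l k) * W n t (l k) \<omega>)
          * \<phi> (\<xi> n t (l a) \<omega>) (\<xi> n t (l b) \<omega>))
      = (\<Sum>l\<in>filters. \<Sum>l'\<in>filters. A_entry t a l * A_entry t b l' * W n t l \<omega> * W n t l' \<omega>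
          * coll [a] [b] \<phi> (\<xi> n t l \<omega>) (\<xi> n t l' \<omega>))" for \<omega>
      using False sum_PiE_pair[OF False, where
          f = "\<lambda>l l'. A_entry t a l * A_entry t b l' * W n t l \<omega> * W n t l' \<omega>
            * \<phi> (\<xi> n t l \<omega>) (\<xi> n t l' \<omega>)"]
      by (simp add: coll_single mult_ac)
    ultimately show ?thesis by simp
  next
    case True
    have "(\<lambda>\<omega>. W n (Suc t) a \<omega> * W n (Suc t) b \<omega> * \<phi> (\<xi> n (Suc t) a \<omega>) (\<xi> n (Suc t) b \<omega>))
      = (\<lambda>\<omega>. (\<Prod>k\<in>{a}. W n (Suc t) k \<omega>)
              * (\<lambda>l \<omega>. W n (Suc t) a \<omega> * \<phi> (\<xi> n t (l a) \<omega>) (\<xi> n t (l a) \<omega>))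
                  (restrict (\<lambda>k. L n t k \<omega>) {a}) \<omega>)"
      using True xi_select t a by (simp add: mult_ac)
    moreover have "AE \<omega> in M. real_cond_exp M (past n t) \<dots> \<omega>
      = (\<Sum>l\<in>PiE {a} (\<lambda>_. filters). (\<Prod>k\<in>{a}. A_entry t k (l k) * W n t (l k) \<omega>)
          * (W n (Suc t) a \<omega> * \<phi> (\<xi> n t (l a) \<omega>) (\<xi> n t (l a) \<omega>)))"
      using a t' by (intro cond_exp_selection t' borel_measurable_times W_measurable_past
          bounded_fun_mult W_bounded \<phi>_xi_meas \<phi>_xi_bounded) auto
    moreover have "(\<Sum>l\<in>PiE {a} (\<lambda>_. filters). (\<Prod>k\<in>{a}. A_entry t k (l k) * W n t (l k) \<omega>)
          * (W n (Suc t) a \<omega> * \<phi> (\<xi> n t (l a) \<omega>) (\<xi> n t (l a) \<omega>)))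
      = (\<Sum>l\<in>filters. \<Sum>l'\<in>filters. A_entry t a l * A_entry t b l' * W n t l \<omega> * W n t l' \<omega>
          * coll [a] [b] \<phi> (\<xi> n t l \<omega>) (\<xi> n t l' \<omega>))" for \<omega>
      using True W_interact[OF t'(1) a, of n \<omega>]
        sum_PiE_singleton[where
          f = "\<lambda>l. A_entry t a l * W n t l \<omega> * (W n (Suc t) a \<omega> * \<phi> (\<xi> n t l \<omega>) (\<xi> n t l \<omega>))"]
      by (simp add: coll_single C1_def sum_distrib_left sum_distrib_right mult_ac)
    ultimately show ?thesis by simp
  qed
qed

lemma lineage_term_measurable:
  assumes "t \<le> Sm" "i \<in> PiE {t..Sm} (\<lambda>_. filters)" "j \<in> PiE {t..Sm} (\<lambda>_. filters)"
    and \<psi>_meas: "(\<lambda>(x, y). \<psi> x y) \<in> borel_measurable (blockM Np X \<Otimes>\<^sub>M blockM Np X)"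
  shows "lineage_term W \<xi> \<psi> Sm n i_top j_top t i j \<in> borel_measurable (G n t)"
proof -
  have "i t \<in> filters" "j t \<in> filters" using assms(1-3) by auto
  then show ?thesis
    unfolding lineage_term_def[abs_def] using assms(1)
    by (intro borel_measurable_times borel_measurable_const W_measurable_G
        measurable_Pair_compose_split[OF coll_measurable[OF \<psi>_meas]] measurable_xi_G) auto
qed

lemma lineage_sum_measurable:
  assumes "t \<le> Sm"
    and "(\<lambda>(x, y). \<psi> x y) \<in> borel_measurable (blockM Np X \<Otimes>\<^sub>M blockM Np X)"
  shows "lineage_sum W \<xi> \<psi> Sm n i_top j_top t \<in> borel_measurable (G n t)"
  unfolding lineage_sum_def[abs_def]
  using lineage_term_measurable[OF assms(1) _ _ assms(2)] by measurable

lemma lineage_sum_bounded: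
  assumes "t \<le> Sm" and "\<exists>B. \<forall>x y. \<bar>\<psi> x y\<bar> \<le> B"
  shows "bounded_fun (lineage_sum W \<xi> \<psi> Sm n i_top j_top t)"
  unfolding lineage_sum_def[abs_def] lineage_term_def using assms
  by (intro bounded_fun_sum bounded_fun_mult bounded_fun_const W_bounded
      bounded_fun_compose2[OF coll_bounded]) (auto simp: PiE_iff)

lemma cond_exp_lineage_sum_step:
  assumes t: "1 \<le> t" "t < Sm"
    and \<psi>_meas: "(\<lambda>(x, y). \<psi> x y) \<in> borel_measurable (blockM Np X \<Otimes>\<^sub>M blockM Np X)"
    and \<psi>_bounded: "\<exists>B. \<forall>x y. \<bar>\<psi> x y\<bar> \<le> B"
  shows "AE \<omega> in M. real_cond_exp M (past n t) (lineage_sum W \<xi> \<psi> Sm n i_top j_top (Suc t)) \<omega>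
    = lineage_sum W \<xi> \<psi> Sm n i_top j_top t \<omega>"
proof -
  interpret sigma_finite_subalgebra M "past n t" by (rule sigma_finite_past)
  interpret prob_space M by (rule prob_space_M)
  let ?P = "PiE {Suc t..Sm} (\<lambda>_. filters)"
  let ?w = "lineage_weight Sm i_top j_top (Suc t)"
  define \<phi> where "\<phi> i j = coll (map i [Suc (Suc t)..<Sm+1]) (map j [Suc (Suc t)..<Sm+1]) \<psi>"
    for i j :: "nat \<Rightarrow> nat"
  define Y where "Y i j \<omega> = W n (Suc t) (i (Suc t)) \<omega> * W n (Suc t) (j (Suc t)) \<omega>
      * \<phi> i j (\<xi> n (Suc t) (i (Suc t)) \<omega>) (\<xi> n (Suc t) (j (Suc t)) \<omega>)" for i j \<omega>
  have fin: "finite ?P" by (simp add: finite_PiE)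
  have top: "i (Suc t) \<in> filters" if "i \<in> ?P" for i
    using that t by auto
  have Y_int: "integrable M (Y i j)" if "i \<in> ?P" "j \<in> ?P" for i j
    unfolding Y_def[abs_def] \<phi>_def using top[OF that(1)] top[OF that(2)] t
    by (intro integrable_bounded_fun bounded_fun_mult W_bounded
        bounded_fun_compose2[OF coll_bounded[OF \<psi>_bounded]] borel_measurable_times W_measurable
        measurable_Pair_compose_split[OF coll_measurable[OF \<psi>_meas]] measurable_xi) auto
  have expand: "lineage_sum W \<xi> \<psi> Sm n i_top j_top (Suc t) = (\<lambda>\<omega>. \<Sum>i\<in>?P. \<Sum>j\<in>?P. ?w i j * Y i j \<omega>)"
    by (simp add: fun_eq_iff lineage_sum_def lineage_term_def Y_def \<phi>_def mult.assoc)
  have "AE \<omega> in M. real_cond_exp M (past n t) (\<lambda>\<omega>. \<Sum>i\<in>?P. \<Sum>j\<in>?P. ?w i j * Y i j \<omega>) \<omega>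
      = (\<Sum>i\<in>?P. \<Sum>j\<in>?P. real_cond_exp M (past n t) (\<lambda>\<omega>. ?w i j * Y i j \<omega>) \<omega>)"
    using fin Y_int by (intro real_cond_exp_double_sum) auto
  moreover have "AE \<omega> in M. \<forall>i\<in>?P. \<forall>j\<in>?P.
      real_cond_exp M (past n t) (\<lambda>\<omega>. ?w i j * Y i j \<omega>) \<omega>
        = ?w i j * real_cond_exp M (past n t) (Y i j) \<omega>"
    using fin Y_int by (intro AE_finite_allI real_cond_exp_cmult) auto
  moreover have "AE \<omega> in M. \<forall>i\<in>?P. \<forall>j\<in>?P. real_cond_exp M (past n t) (Y i j) \<omega>
      = (\<Sum>l\<in>filters. \<Sum>l'\<in>filters. A_entry t (i (Suc t)) l * A_entry t (j (Suc t)) l'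
          * W n t l \<omega> * W n t l' \<omega> * coll [i (Suc t)] [j (Suc t)] (\<phi> i j) (\<xi> n t l \<omega>) (\<xi> n t l' \<omega>))"
    unfolding Y_def[abs_def] \<phi>_def using t top
    by (intro AE_finite_allI fin cond_exp_pair_selection coll_measurable[OF \<psi>_meas]
        coll_bounded[OF \<psi>_bounded]) auto
  ultimately show ?thesis
    unfolding expand by eventually_elim (simp add: lineage_sum_split[OF t(2)] \<phi>_def)
qed

lemma cond_exp_lineage_sum:
  assumes s: "1 \<le> s" "s \<le> Sm"
    and \<psi>_meas: "(\<lambda>(x, y). \<psi> x y) \<in> borel_measurable (blockM Np X \<Otimes>\<^sub>M blockM Np X)"
    and \<psi>_bounded: "\<exists>B. \<forall>x y. \<bar>\<psi> x y\<bar> \<le> B"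
  shows "AE \<omega> in M. real_cond_exp M (G n s) (lineage_sum W \<xi> \<psi> Sm n i_top j_top Sm) \<omega>
    = lineage_sum W \<xi> \<psi> Sm n i_top j_top s \<omega>"
proof -
  interpret sigma_finite_subalgebra M "G n s" by (rule sigma_finite_G)
  interpret prob_space M by (rule prob_space_M)
  let ?\<Phi> = "lineage_sum W \<xi> \<psi> Sm n i_top j_top"
  have integrable: "integrable M (?\<Phi> t)" if "t \<le> Sm" for t
    using that lineage_sum_bounded[OF that \<psi>_bounded]
      measurable_from_subalg[OF subalgebra_G lineage_sum_measurable[OF that \<psi>_meas]]
    by (intro integrable_bounded_fun) auto
  have "AE \<omega> in M. real_cond_exp M (G n s) (?\<Phi> Sm) \<omega> = real_cond_exp M (G n s) (?\<Phi> u) \<omega>"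
    if "s \<le> u" "u \<le> Sm" for u
    using that(2,1)
  proof (induction u rule: inc_induct)
    case (step t)
    have "AE \<omega> in M. real_cond_exp M (G n s) (real_cond_exp M (past n t) (?\<Phi> (Suc t))) \<omega>
        = real_cond_exp M (G n s) (?\<Phi> (Suc t)) \<omega>"
      using step s integrable[of "Suc t"]
      by (intro real_cond_exp_nested_subalg subalgebra_past subalgebra_past_G) auto
    moreover have "AE \<omega> in M. real_cond_exp M (G n s) (real_cond_exp M (past n t) (?\<Phi> (Suc t))) \<omega>
        = real_cond_exp M (G n s) (?\<Phi> t) \<omega>"
      using step s integrable[of t]
      by (intro real_cond_exp_cong cond_exp_lineage_sum_step \<psi>_meas \<psi>_bounded
          borel_measurable_cond_exp2) auto
    moreover have "AE \<omega> in M.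
        real_cond_exp M (G n s) (?\<Phi> Sm) \<omega> = real_cond_exp M (G n s) (?\<Phi> (Suc t)) \<omega>"
      using step by simp
    ultimately show ?case by eventually_elim simp
  qed simp
  then have "AE \<omega> in M. real_cond_exp M (G n s) (?\<Phi> Sm) \<omega> = real_cond_exp M (G n s) (?\<Phi> s) \<omega>"
    using s by simp
  moreover have "AE \<omega> in M. real_cond_exp M (G n s) (?\<Phi> s) \<omega> = ?\<Phi> s \<omega>"
    using s by (intro real_cond_exp_F_meas integrable lineage_sum_measurable \<psi>_meas)
  ultimately show ?thesis by eventually_elim simp
qed

end

theorem lemma2:
  fixes M :: "'a measure" and X :: "'x measure" and \<pi>0 :: "'x measure"
    and K :: "nat \<Rightarrow> 'x \<Rightarrow> 'x measure" and g :: "nat \<Rightarrow> 'x \<Rightarrow> real"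
    and Sm Np :: nat
    and \<xi> :: "nat \<Rightarrow> nat \<Rightarrow> nat \<Rightarrow> 'a \<Rightarrow> nat \<Rightarrow> 'x"
    and W :: "nat \<Rightarrow> nat \<Rightarrow> nat \<Rightarrow> 'a \<Rightarrow> real"
    and J L :: "nat \<Rightarrow> nat \<Rightarrow> nat \<Rightarrow> 'a \<Rightarrow> nat"
    and \<psi> :: "(nat \<Rightarrow> 'x) \<Rightarrow> (nat \<Rightarrow> 'x) \<Rightarrow> real"
    and n s i_top j_top :: nat
  assumes model: "airpf M X \<pi>0 K g Sm Np \<xi> W J L"
    and Np_pos: "Np \<ge> 1"
    and \<psi>_meas: "(\<lambda>(x, y). \<psi> x y) \<in> borel_measurable (blockM Np X \<Otimes>\<^sub>M blockM Np X)"
    and \<psi>_bdd: "\<exists>B. \<forall>x y. \<bar>\<psi> x y\<bar> \<le> B"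
    and n_pos: "n \<ge> 1"
    and s_range: "1 \<le> s" "s < Sm"
    and i_top: "i_top \<in> {1..2^Sm}" and j_top: "j_top \<in> {1..2^Sm}"
  shows "AE \<omega> in M.
    (\<Sum>i \<in> {1..2^Sm}. \<Sum>j \<in> {1..2^Sm}.
       real_cond_exp M (G_alg M X Sm Np \<xi> n s)
         (\<lambda>\<omega>. A_entry Sm i_top i * A_entry Sm j_top j * W n Sm i \<omega> * W n Sm j \<omega>
                * \<psi> (\<xi> n Sm i \<omega>) (\<xi> n Sm j \<omega>)) \<omega>)
    = (\<Sum>i \<in> PiE {s..Sm} (\<lambda>_. {1..2^Sm}). \<Sum>j \<in> PiE {s..Sm} (\<lambda>_. {1..2^Sm}).
         (\<Prod>q = s..Sm. A_entry q ((i(Sm+1 := i_top)) (q+1)) (i q)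
                       * A_entry q ((j(Sm+1 := j_top)) (q+1)) (j q))
         * W n s (i s) \<omega> * W n s (j s) \<omega>
         * coll (map i [s+1..<Sm+1]) (map j [s+1..<Sm+1]) \<psi> (\<xi> n s (i s) \<omega>) (\<xi> n s (j s) \<omega>))"
proof -
  interpret airpf_run M X g Sm Np \<xi> W J L
    using model by (rule airpf_run_if_airpf)
  interpret sigma_finite_subalgebra M "G n s" by (rule sigma_finite_G)
  interpret prob_space M by (rule prob_space_M)
  let ?Y = "\<lambda>i j \<omega>. A_entry Sm i_top i * A_entry Sm j_top j * W n Sm i \<omega> * W n Sm j \<omega>
    * \<psi> (\<xi> n Sm i \<omega>) (\<xi> n Sm j \<omega>)"
  have top: "lineage_sum W \<xi> \<psi> Sm n i_top j_top Sm = (\<lambda>\<omega>. \<Sum>i\<in>filters. \<Sum>j\<in>filters. ?Y i j \<omega>)"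
    by (simp add: fun_eq_iff lineage_sum_top)
  have "integrable M (?Y i j)" if "i \<in> filters" "j \<in> filters" for i j
    using that by (intro integrable_bounded_fun bounded_fun_mult bounded_fun_const W_bounded
        bounded_fun_compose2[OF \<psi>_bdd] borel_measurable_times borel_measurable_const W_measurable
        measurable_Pair_compose_split[OF \<psi>_meas] measurable_xi) auto
  then have "AE \<omega> in M. real_cond_exp M (G n s) (\<lambda>\<omega>. \<Sum>i\<in>filters. \<Sum>j\<in>filters. ?Y i j \<omega>) \<omega>
      = (\<Sum>i\<in>filters. \<Sum>j\<in>filters. real_cond_exp M (G n s) (?Y i j) \<omega>)"
    by (intro real_cond_exp_double_sum) auto
  moreover have "AE \<omega> in M. real_cond_exp M (G n s) (\<lambda>\<omega>. \<Sum>i\<in>filters. \<Sum>j\<in>filters. ?Y i j \<omega>) \<omega>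
      = lineage_sum W \<xi> \<psi> Sm n i_top j_top s \<omega>"
    using cond_exp_lineage_sum[OF s_range(1) less_imp_le[OF s_range(2)] \<psi>_meas \<psi>_bdd,
        where n = n and i_top = i_top and j_top = j_top]
    unfolding top .
  ultimately show ?thesis
    by eventually_elim (simp add: lineage_sum_def lineage_term_def lineage_weight_def)
qed

end
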